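(* Let $\varphi$ be an $\mathrm{LTL_{PSL}}$ formula, $D=(I^+,I^-)$ a partition of the set $I$ of its subformulae of the form $s\preceq s'$, and $\varphi_D$ the associated formula. If $\varphi_D$ is $\mathrm{SLTL}$-satisfiable, then the language of the generalised Büchi automaton $\mathcal{A}_{\varphi_D}$ is non-empty.
   Context: Propositional variables $\mathcal{P}$ and standpoint symbols $\mathcal{S}$ (with universal symbol $*$) are countably infinite. SLTL formulae: $\varphi ::= p \mid s \preceq s' \mid \neg\varphi \mid \varphi\wedge\varphi \mid \Diamond_s\varphi \mid \Box_s\varphi \mid X\varphi \mid \varphi\,U\,\varphi$. A model is $M=(\Pi,\lambda)$ with $\Pi\neq\emptyset$ a set of traces $\sigma:\mathbb{N}\to 2^{\mathcal{P}}$, $\lambda:\mathcal{S}\to 2^{\Pi}\setminus\{\emptyset\}$, $\lambda( * )=\Pi$; $M,\sigma,i\models p$ iff $p\in\sigma(i)$; $s\preceq s'$ holds iff $\lambda(s)\subseteq\lambda(s')$; $\Diamond_s\psi$ (resp. $\Box_s\psi$) holds at $\sigma,i$ iff $\psi$ holds at $\sigma',i$ for some (resp. all) $\sigma'\in\lambda(s)$; $X\psi$ holds at $\sigma,i$ iff $\psi$ holds at $\sigma,i+1$; $\psi U\chi$ holds at $\sigma,i$ iff $\chi$ holds at some $\sigma,i'$, $i'\ge i$, and $\psi$ at $\sigma,i''$ for all $i\le i''<i'$. $G\psi:=\neg(\top U\neg\psi)$. Satisfiable: holds at $\sigma,0$ for some $M$, $\sigma\in\Pi$. $\mathrm{LTL_{PSL}}$: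 SLTL formulae with no $X$ or $U$ in the scope of any $\Diamond_s$ or $\Box_s$. $\varphi_D:=\varphi[I^+\mapsto\top,I^-\mapsto\bot]\wedge G\big(\bigwedge_{(s\preceq s')\in I^+}(s\preceq s')\wedge\bigwedge_{(s\preceq s')\in I^-}(\Diamond_s p_{s,s'}\wedge\neg\Diamond_{s'}p_{s,s'})\big)$, where members of $I^+$ (resp. $I^-$) are replaced by $\top$ (resp. $\bot$) and the $p_{s,s'}$ are fresh variables. PSL (propositional standpoint logic) is the temporal-free fragment; a PSL model is $(\Pi,V)$ with $\Pi$ finite nonempty, $V:\mathcal{S}\cup\mathcal{P}\to 2^{\Pi}$, $V(s)\neq\emptyset$ for all $s$, $V( * )=\Pi$; $\pi\models p$ iff $\pi\in V(p)$, $s\preceq s'$ iff $V(s)\subseteq V(s')$, $\Diamond_s\psi$/$\Box_s\psi$ iff $\psi$ holds at some/all $\pi'\in V(s)$. The closure $cl(\varphi_D)$ is the smallest set containing all subformulae of $\varphi_D$, $\top$ and $\bot$, closed under negation (identifying $\neg\neg\psi$ with $\psi$), and such that $\psi U\psi'\in cl(\varphi_D)$ implies $X(\psi U\psi')\in cl(\varphi_D)$. $B\subseteq cl(\varphi_D)$ is maximally consistent if $\top\in B$, $\bot\notin B$; $\psi\in B$ iff $\neg\psi\notin B$ for $\neg\psi\in cl(\varphi_D)$; $\psi_1\wedge\psi_2\in B$ iff $\psi_1,\psi_2\in B$; $\psi_1U\psi_2\in B$ iff $\psi_2\in B$ or $\{\psi_1,X(\psi_1U\psi_2)\}\subseteq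 B$. $B$ is standpoint-consistent if the conjunction of the members of $B$ that are PSL formulae is PSL-satisfiable; $B$ is s-elementary if maximally consistent and standpoint-consistent. $\mathcal{A}_{\varphi_D}=(Q,2^{\mathcal{P}(\varphi_D)},\delta,Q_0,\mathcal{F})$ where $\mathcal{P}(\varphi_D)$ is the set of variables of $\varphi_D$; $Q$ is the set of s-elementary sets; $Q_0=\{B\in Q:\varphi_D\in B\}$; $\mathcal{F}$ contains, for each $\psi_1U\psi_2\in cl(\varphi_D)$, the set $\{B\in Q:\psi_1U\psi_2\notin B\text{ or }\psi_2\in B\}$; $\delta(B,A)=\emptyset$ if $A\neq B\cap\mathcal{P}(\varphi_D)$, and otherwise $\delta(B,A)$ is the set of $B'\in Q$ such that for every $X\psi\in cl(\varphi_D)$, $X\psi\in B$ iff $\psi\in B'$. An infinite word is accepted if it has a run starting in $Q_0$ that visits each set of $\mathcal{F}$ infinitely often. *)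

theory Defs
  imports Main
begin

(* Standpoint symbols: the universal symbol Star plus countably many others. *)
datatype stpt = Star | Sp nat

datatype fm =
    Top
  | Var nat
  | Prec stpt stpt
  | Neg fm
  | And fm fm
  | Dia stpt fm
  | Box stpt fm
  | Next fm
  | Until fm fm

abbreviation Bot :: fm where "Bot \<equiv> Neg Top"

definition Glob :: "fm \<Rightarrow> fm" where
  "Glob \<psi> = Neg (Until Top (Neg \<psi>))"

type_synonym trace = "nat \<Rightarrow> nat set"

definition sltl_model :: "trace set \<Rightarrow> (stpt \<Rightarrow> trace set) \<Rightarrow> bool" where
  "sltl_model Pi lam \<longleftrightarrow> Pi \<noteq> {} \<and> lam Star = Pi \<and> (\<forall>s. lam s \<noteq> {} \<and> lam s \<subseteq> Pi)"

fun sem :: "(stpt \<Rightarrow> trace set) \<Rightarrow> trace \<Rightarrow> nat \<Rightarrow> fm \<Rightarrow> bool" where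
  "sem lam \<sigma> i Top = True"
| "sem lam \<sigma> i (Var p) = (p \<in> \<sigma> i)"
| "sem lam \<sigma> i (Prec s s') = (lam s \<subseteq> lam s')"
| "sem lam \<sigma> i (Neg \<psi>) = (\<not> sem lam \<sigma> i \<psi>)"
| "sem lam \<sigma> i (And \<psi> \<chi>) = (sem lam \<sigma> i \<psi> \<and> sem lam \<sigma> i \<chi>)"
| "sem lam \<sigma> i (Dia s \<psi>) = (\<exists>\<sigma>'\<in>lam s. sem lam \<sigma>' i \<psi>)"
| "sem lam \<sigma> i (Box s \<psi>) = (\<forall>\<sigma>'\<in>lam s. sem lam \<sigma>' i \<psi>)"
| "sem lam \<sigma> i (Next \<psi>) = sem lam \<sigma> (Suc i) \<psi>"
| "sem lam \<sigma> i (Until \<psi> \<chi>) =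
     (\<exists>i'\<ge>i. sem lam \<sigma> i' \<chi> \<and> (\<forall>i''. i \<le> i'' \<and> i'' < i' \<longrightarrow> sem lam \<sigma> i'' \<psi>))"

definition sltl_satisfiable :: "fm \<Rightarrow> bool" where
  "sltl_satisfiable \<phi> \<longleftrightarrow> (\<exists>Pi lam \<sigma>. sltl_model Pi lam \<and> \<sigma> \<in> Pi \<and> sem lam \<sigma> 0 \<phi>)"

(* temporal-free = PSL formula *)
fun temporal_free :: "fm \<Rightarrow> bool" where
  "temporal_free Top = True"
| "temporal_free (Var p) = True"
| "temporal_free (Prec s s') = True"
| "temporal_free (Neg \<psi>) = temporal_free \<psi>"
| "temporal_free (And \<psi> \<chi>) = (temporal_free \<psi> \<and> temporal_free \<chi>)"
| "temporal_free (Dia s \<psi>) = temporal_free \<psi>"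
| "temporal_free (Box s \<psi>) = temporal_free \<psi>"
| "temporal_free (Next \<psi>) = False"
| "temporal_free (Until \<psi> \<chi>) = False"

fun ltl_psl :: "fm \<Rightarrow> bool" where
  "ltl_psl Top = True"
| "ltl_psl (Var p) = True"
| "ltl_psl (Prec s s') = True"
| "ltl_psl (Neg \<psi>) = ltl_psl \<psi>"
| "ltl_psl (And \<psi> \<chi>) = (ltl_psl \<psi> \<and> ltl_psl \<chi>)"
| "ltl_psl (Dia s \<psi>) = temporal_free \<psi>"
| "ltl_psl (Box s \<psi>) = temporal_free \<psi>"
| "ltl_psl (Next \<psi>) = ltl_psl \<psi>"
| "ltl_psl (Until \<psi> \<chi>) = (ltl_psl \<psi> \<and> ltl_psl \<chi>)"

fun subformulas :: "fm \<Rightarrow> fm set" where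
  "subformulas Top = {Top}"
| "subformulas (Var p) = {Var p}"
| "subformulas (Prec s s') = {Prec s s'}"
| "subformulas (Neg \<psi>) = insert (Neg \<psi>) (subformulas \<psi>)"
| "subformulas (And \<psi> \<chi>) = insert (And \<psi> \<chi>) (subformulas \<psi> \<union> subformulas \<chi>)"
| "subformulas (Dia s \<psi>) = insert (Dia s \<psi>) (subformulas \<psi>)"
| "subformulas (Box s \<psi>) = insert (Box s \<psi>) (subformulas \<psi>)"
| "subformulas (Next \<psi>) = insert (Next \<psi>) (subformulas \<psi>)"
| "subformulas (Until \<psi> \<chi>) = insert (Until \<psi> \<chi>) (subformulas \<psi> \<union> subformulas \<chi>)"

fun vars :: "fm \<Rightarrow> nat set" where
  "vars Top = {}"
| "vars (Var p) = {p}"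
| "vars (Prec s s') = {}"
| "vars (Neg \<psi>) = vars \<psi>"
| "vars (And \<psi> \<chi>) = vars \<psi> \<union> vars \<chi>"
| "vars (Dia s \<psi>) = vars \<psi>"
| "vars (Box s \<psi>) = vars \<psi>"
| "vars (Next \<psi>) = vars \<psi>"
| "vars (Until \<psi> \<chi>) = vars \<psi> \<union> vars \<chi>"

definition sharpenings :: "fm \<Rightarrow> (stpt \<times> stpt) set" where
  "sharpenings \<phi> = {(s, s'). Prec s s' \<in> subformulas \<phi>}"

fun repl :: "(stpt \<times> stpt) set \<Rightarrow> (stpt \<times> stpt) set \<Rightarrow> fm \<Rightarrow> fm" where
  "repl Ip Im Top = Top"
| "repl Ip Im (Var p) = Var p"
| "repl Ip Im (Prec s s') =
     (if (s, s') \<in> Ip then Top else if (s, s') \<in> Im then Bot else Prec s s')"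
| "repl Ip Im (Neg \<psi>) = Neg (repl Ip Im \<psi>)"
| "repl Ip Im (And \<psi> \<chi>) = And (repl Ip Im \<psi>) (repl Ip Im \<chi>)"
| "repl Ip Im (Dia s \<psi>) = Dia s (repl Ip Im \<psi>)"
| "repl Ip Im (Box s \<psi>) = Box s (repl Ip Im \<psi>)"
| "repl Ip Im (Next \<psi>) = Next (repl Ip Im \<psi>)"
| "repl Ip Im (Until \<psi> \<chi>) = Until (repl Ip Im \<psi>) (repl Ip Im \<chi>)"

fun conj :: "fm list \<Rightarrow> fm" where
  "conj [] = Top"
| "conj [\<psi>] = \<psi>"
| "conj (\<psi> # \<psi>s) = And \<psi> (conj \<psi>s)"

(* phi_D, for enumerations ip, im of I+ and I- and the fresh-variable map fr *)
definition phiD :: "fm \<Rightarrow> (stpt \<times> stpt) list \<Rightarrow> (stpt \<times> stpt) list \<Rightarrow> (stpt \<Rightarrow> stpt \<Rightarrow> nat) \<Rightarrow> fm" where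
  "phiD \<phi> ip im fr =
     And (repl (set ip) (set im) \<phi>)
         (Glob (conj (map (\<lambda>(s, s'). Prec s s') ip @
                      map (\<lambda>(s, s'). And (Dia s (Var (fr s s'))) (Neg (Dia s' (Var (fr s s'))))) im)))"

fun neg :: "fm \<Rightarrow> fm" where
  "neg (Neg \<psi>) = \<psi>"
| "neg \<psi> = Neg \<psi>"

inductive_set closure :: "fm \<Rightarrow> fm set" for \<phi> :: fm where
  sub: "\<psi> \<in> subformulas \<phi> \<Longrightarrow> \<psi> \<in> closure \<phi>"
| top: "Top \<in> closure \<phi>"
| bot: "Bot \<in> closure \<phi>"
| negc: "\<psi> \<in> closure \<phi> \<Longrightarrow> neg \<psi> \<in> closure \<phi>"
| untl: "Until \<psi> \<chi> \<in> closure \<phi> \<Longrightarrow> Next (Until \<psi> \<chi>) \<in> closure \<phi>"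

definition max_consistent :: "fm \<Rightarrow> fm set \<Rightarrow> bool" where
  "max_consistent \<phi> B \<longleftrightarrow> B \<subseteq> closure \<phi> \<and> Top \<in> B \<and> Bot \<notin> B
     \<and> (\<forall>\<psi>\<in>closure \<phi>. \<psi> \<in> B \<longleftrightarrow> neg \<psi> \<notin> B)
     \<and> (\<forall>\<psi> \<chi>. And \<psi> \<chi> \<in> closure \<phi> \<longrightarrow> (And \<psi> \<chi> \<in> B \<longleftrightarrow> \<psi> \<in> B \<and> \<chi> \<in> B))
     \<and> (\<forall>\<psi> \<chi>. Until \<psi> \<chi> \<in> closure \<phi> \<longrightarrow>
          (Until \<psi> \<chi> \<in> B \<longleftrightarrow> \<chi> \<in> B \<or> (\<psi> \<in> B \<and> Next (Until \<psi> \<chi>) \<in> B)))"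

definition psl_model :: "nat set \<Rightarrow> (stpt \<Rightarrow> nat set) \<Rightarrow> (nat \<Rightarrow> nat set) \<Rightarrow> bool" where
  "psl_model W Vs Vp \<longleftrightarrow> finite W \<and> W \<noteq> {} \<and> Vs Star = W
     \<and> (\<forall>s. Vs s \<noteq> {} \<and> Vs s \<subseteq> W) \<and> (\<forall>p. Vp p \<subseteq> W)"

fun psl_sem :: "(stpt \<Rightarrow> nat set) \<Rightarrow> (nat \<Rightarrow> nat set) \<Rightarrow> nat \<Rightarrow> fm \<Rightarrow> bool" where
  "psl_sem Vs Vp w Top = True"
| "psl_sem Vs Vp w (Var p) = (w \<in> Vp p)"
| "psl_sem Vs Vp w (Prec s s') = (Vs s \<subseteq> Vs s')"
| "psl_sem Vs Vp w (Neg \<psi>) = (\<not> psl_sem Vs Vp w \<psi>)"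
| "psl_sem Vs Vp w (And \<psi> \<chi>) = (psl_sem Vs Vp w \<psi> \<and> psl_sem Vs Vp w \<chi>)"
| "psl_sem Vs Vp w (Dia s \<psi>) = (\<exists>w'\<in>Vs s. psl_sem Vs Vp w' \<psi>)"
| "psl_sem Vs Vp w (Box s \<psi>) = (\<forall>w'\<in>Vs s. psl_sem Vs Vp w' \<psi>)"
| "psl_sem Vs Vp w (Next \<psi>) = False"  (* not a PSL formula; never used *)
| "psl_sem Vs Vp w (Until \<psi> \<chi>) = False"  (* not a PSL formula; never used *)

definition standpoint_consistent :: "fm set \<Rightarrow> bool" where
  "standpoint_consistent B \<longleftrightarrow> (\<exists>W Vs Vp w. psl_model W Vs Vp \<and> w \<in> W \<and>
      (\<forall>\<psi>\<in>B. temporal_free \<psi> \<longrightarrow> psl_sem Vs Vp w \<psi>))"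

definition s_elementary :: "fm \<Rightarrow> fm set \<Rightarrow> bool" where
  "s_elementary \<phi> B \<longleftrightarrow> max_consistent \<phi> B \<and> standpoint_consistent B"

definition aut_Q :: "fm \<Rightarrow> fm set set" where
  "aut_Q \<phi> = {B. s_elementary \<phi> B}"

definition aut_Q0 :: "fm \<Rightarrow> fm set set" where
  "aut_Q0 \<phi> = {B \<in> aut_Q \<phi>. \<phi> \<in> B}"

definition aut_delta :: "fm \<Rightarrow> fm set \<Rightarrow> nat set \<Rightarrow> fm set set" where
  "aut_delta \<phi> B A =
     (if A \<noteq> {p \<in> vars \<phi>. Var p \<in> B} then {}
      else {B' \<in> aut_Q \<phi>. \<forall>\<psi>. Next \<psi> \<in> closure \<phi> \<longrightarrow> (Next \<psi> \<in> B \<longleftrightarrow> \<psi> \<in> B')})"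

definition aut_F :: "fm \<Rightarrow> fm set set set" where
  "aut_F \<phi> = {{B \<in> aut_Q \<phi>. Until \<psi> \<chi> \<notin> B \<or> \<chi> \<in> B} | \<psi> \<chi>. Until \<psi> \<chi> \<in> closure \<phi>}"

definition accepts :: "fm \<Rightarrow> (nat \<Rightarrow> nat set) \<Rightarrow> bool" where
  "accepts \<phi> w \<longleftrightarrow> (\<exists>r :: nat \<Rightarrow> fm set. r 0 \<in> aut_Q0 \<phi>
      \<and> (\<forall>i. r (Suc i) \<in> aut_delta \<phi> (r i) (w i))
      \<and> (\<forall>F\<in>aut_F \<phi>. infinite {i. r i \<in> F}))"

definition language_nonempty :: "fm \<Rightarrow> bool" where
  "language_nonempty \<phi> \<longleftrightarrow> (\<exists>w. (\<forall>i. w i \<subseteq> vars \<phi>) \<and> accepts \<phi> w)"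

end

theory Submission
  imports Defs "HOL-Library.Infinite_Set"
begin

(* Take a model and a trace \<sigma> satisfying \<phi>_D at 0. At each time i, the closure formulas
   true at (\<sigma>, i) form a maximally consistent set, by the semantics of the connectives and
   the expansion law of U; consecutive sets respect X, and every eventuality \<psi> U \<chi> is
   eventually fulfilled, so they form an accepting run on the word i \<mapsto> \<sigma>(i) \<inter> P(\<phi>_D).
   Standpoint consistency at time i comes from a finite PSL model obtained by identifying
   traces with the same letter at time i: it agrees with the SLTL model on temporal-free
   formulas as long as every sharpening s \<preceq> s' in the closure is true in the model. The only
   sharpenings left in \<phi>_D are those of I\<^sup>+, and the G-conjunct of \<phi>_D asserts all of them. *)

lemma subformulas_refl: "\<psi> \<in> subformulas \<psi>"
  by (cases \<psi>) auto

lemma subformulas_trans: "\<psi> \<in> subformulas \<phi> \<Longrightarrow> subformulas \<psi> \<subseteq> subformulas \<phi>"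
  by (induction \<phi>) auto

lemma vars_subformulas_subset: "\<psi> \<in> subformulas \<phi> \<Longrightarrow> vars \<psi> \<subseteq> vars \<phi>"
  by (induction \<phi>) auto

lemma Var_subformulas_iff: "Var p \<in> subformulas \<psi> \<longleftrightarrow> p \<in> vars \<psi>"
  by (induction \<psi>) auto

lemma finite_vars: "finite (vars \<psi>)"
  by (induction \<psi>) auto

lemma vars_neg [simp]: "vars (neg \<psi>) = vars \<psi>"
  by (cases \<psi>) auto

lemma sharpenings_simps [simp]:
  "sharpenings Top = {}"
  "sharpenings (Var p) = {}"
  "sharpenings (Prec s s') = {(s, s')}"
  "sharpenings (Neg \<psi>) = sharpenings \<psi>"
  "sharpenings (And \<psi> \<chi>) = sharpenings \<psi> \<union> sharpenings \<chi>"
  "sharpenings (Dia s \<psi>) = sharpenings \<psi>"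
  "sharpenings (Box s \<psi>) = sharpenings \<psi>"
  "sharpenings (Next \<psi>) = sharpenings \<psi>"
  "sharpenings (Until \<psi> \<chi>) = sharpenings \<psi> \<union> sharpenings \<chi>"
  by (auto simp: sharpenings_def)

lemma sharpenings_neg [simp]: "sharpenings (neg \<psi>) = sharpenings \<psi>"
  by (cases \<psi>) auto

lemma subformulas_neg: "subformulas (neg \<psi>) \<subseteq> insert (neg \<psi>) (subformulas \<psi>)"
  by (cases \<psi>) auto

lemma closure_subformulas_subset: "\<psi> \<in> closure \<phi> \<Longrightarrow> subformulas \<psi> \<subseteq> closure \<phi>"
proof (induction rule: closure.induct)
  case (sub \<psi>)
  then show ?case
    using subformulas_trans closure.sub by blast
next
  case (negc \<psi>)
  then show ?case
    using subformulas_neg closure.negc by blast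
qed (auto intro: closure.intros)

lemma closure_vars_subset: "\<psi> \<in> closure \<phi> \<Longrightarrow> vars \<psi> \<subseteq> vars \<phi>"
  by (induction rule: closure.induct) (auto dest: vars_subformulas_subset)

lemma closure_sharpenings_subset: "\<psi> \<in> closure \<phi> \<Longrightarrow> sharpenings \<psi> \<subseteq> sharpenings \<phi>"
proof (induction rule: closure.induct)
  case (sub \<psi>)
  then show ?case
    by (auto simp: sharpenings_def dest: subformulas_trans)
qed auto

lemma sharpenings_repl: "sharpenings (repl Ip Im \<psi>) = sharpenings \<psi> - Ip - Im"
  by (induction \<psi>) auto

lemma sharpenings_conj: "sharpenings (conj \<psi>s) = (\<Union>\<psi>\<in>set \<psi>s. sharpenings \<psi>)"
  by (induction \<psi>s rule: conj.induct) auto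

lemma sharpenings_phiD:
  "sharpenings (phiD \<phi> ip im fr) = sharpenings \<phi> - set ip - set im \<union> set ip"
  by (auto simp: phiD_def Glob_def sharpenings_conj sharpenings_repl)

lemma sem_neg [simp]: "sem lam \<sigma> i (neg \<psi>) \<longleftrightarrow> \<not> sem lam \<sigma> i \<psi>"
  by (cases \<psi>) auto

lemma sem_conj: "sem lam \<sigma> i (conj \<psi>s) \<longleftrightarrow> (\<forall>\<psi>\<in>set \<psi>s. sem lam \<sigma> i \<psi>)"
  by (induction \<psi>s rule: conj.induct) auto

lemma sem_Glob: "sem lam \<sigma> i (Glob \<psi>) \<longleftrightarrow> (\<forall>j\<ge>i. sem lam \<sigma> j \<psi>)"
  by (auto simp: Glob_def)

lemma sem_Until_unfold:
  "sem lam \<sigma> i (Until \<psi> \<chi>) \<longleftrightarrow>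
     sem lam \<sigma> i \<chi> \<or> sem lam \<sigma> i \<psi> \<and> sem lam \<sigma> (Suc i) (Until \<psi> \<chi>)"
proof
  assume "sem lam \<sigma> i (Until \<psi> \<chi>)"
  then obtain k where k: "k \<ge> i" "sem lam \<sigma> k \<chi>" "\<forall>j. i \<le> j \<and> j < k \<longrightarrow> sem lam \<sigma> j \<psi>"
    by auto
  show "sem lam \<sigma> i \<chi> \<or> sem lam \<sigma> i \<psi> \<and> sem lam \<sigma> (Suc i) (Until \<psi> \<chi>)"
  proof (cases "k = i")
    case False
    with k show ?thesis
      by (auto intro!: exI[of _ k])
  qed (use k in simp)
next
  assume "sem lam \<sigma> i \<chi> \<or> sem lam \<sigma> i \<psi> \<and> sem lam \<sigma> (Suc i) (Until \<psi> \<chi>)"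
  then show "sem lam \<sigma> i (Until \<psi> \<chi>)"
    by (auto simp: Suc_le_eq) (metis le_eq_less_or_eq less_imp_le_nat)
qed

definition true_closure :: "fm \<Rightarrow> (stpt \<Rightarrow> trace set) \<Rightarrow> trace \<Rightarrow> nat \<Rightarrow> fm set" where
  "true_closure \<phi> lam \<sigma> i = {\<psi> \<in> closure \<phi>. sem lam \<sigma> i \<psi>}"

lemma max_consistent_true_closure: "max_consistent \<phi> (true_closure \<phi> lam \<sigma> i)"
  unfolding max_consistent_def
proof (intro conjI allI impI ballI)
  fix \<psi> \<chi>
  assume "And \<psi> \<chi> \<in> closure \<phi>"
  then have "\<psi> \<in> closure \<phi>" "\<chi> \<in> closure \<phi>"
    using closure_subformulas_subset subformulas_refl by fastforce+
  then show "And \<psi> \<chi> \<in> true_closure \<phi> lam \<sigma> i \<longleftrightarrow>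
      \<psi> \<in> true_closure \<phi> lam \<sigma> i \<and> \<chi> \<in> true_closure \<phi> lam \<sigma> i"
    using \<open>And \<psi> \<chi> \<in> closure \<phi>\<close> by (simp add: true_closure_def)
next
  fix \<psi> \<chi>
  assume until: "Until \<psi> \<chi> \<in> closure \<phi>"
  then have "\<psi> \<in> closure \<phi>" "\<chi> \<in> closure \<phi>" "Next (Until \<psi> \<chi>) \<in> closure \<phi>"
    using closure_subformulas_subset subformulas_refl closure.untl by fastforce+
  then show "Until \<psi> \<chi> \<in> true_closure \<phi> lam \<sigma> i \<longleftrightarrow>
      \<chi> \<in> true_closure \<phi> lam \<sigma> i \<or>
      \<psi> \<in> true_closure \<phi> lam \<sigma> i \<and> Next (Until \<psi> \<chi>) \<in> true_closure \<phi> lam \<sigma> i"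
    using until sem_Until_unfold[of lam \<sigma> i \<psi> \<chi>] by (simp add: true_closure_def)
next
  fix \<psi>
  assume "\<psi> \<in> closure \<phi>"
  then show "\<psi> \<in> true_closure \<phi> lam \<sigma> i \<longleftrightarrow> neg \<psi> \<notin> true_closure \<phi> lam \<sigma> i"
    using closure.negc by (simp add: true_closure_def)
qed (simp_all add: true_closure_def closure.top)

lemma psl_sem_collapse:
  assumes collapse: "\<forall>\<sigma>\<in>Pi. \<forall>\<sigma>'\<in>Pi. f \<sigma> = f \<sigma>' \<longrightarrow> \<sigma> i \<inter> V = \<sigma>' i \<inter> V"
    and lam: "\<And>s. lam s \<subseteq> Pi"
    and "temporal_free \<psi>" "vars \<psi> \<subseteq> V" "\<forall>(s, s')\<in>sharpenings \<psi>. lam s \<subseteq> lam s'"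
    and "\<sigma> \<in> Pi"
  shows "psl_sem (\<lambda>s. f ` lam s) (\<lambda>p. f ` {\<tau> \<in> Pi. p \<in> \<tau> i}) (f \<sigma>) \<psi> = sem lam \<sigma> i \<psi>"
  using assms(3-)
proof (induction \<psi> arbitrary: \<sigma>)
  case (Var p)
  have "p \<in> \<sigma> i" if "\<sigma>' \<in> Pi" "f \<sigma> = f \<sigma>'" "p \<in> \<sigma>' i" for \<sigma>'
  proof -
    have "\<sigma> i \<inter> V = \<sigma>' i \<inter> V"
      using collapse \<open>\<sigma> \<in> Pi\<close> that(1,2) by blast
    then show ?thesis
      using that(3) Var.prems(2) by auto
  qed
  then show ?case
    using Var.prems(4) by auto
next
  case (Prec s s')
  then show ?case
    by (simp add: image_mono)
next
  case (Dia s \<psi>)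
  have "psl_sem (\<lambda>s. f ` lam s) (\<lambda>p. f ` {\<tau> \<in> Pi. p \<in> \<tau> i}) (f \<sigma>') \<psi> = sem lam \<sigma>' i \<psi>"
    if "\<sigma>' \<in> lam s" for \<sigma>'
    using Dia.prems lam[of s] that by (intro Dia.IH) auto
  then show ?case
    by simp
next
  case (Box s \<psi>)
  have "psl_sem (\<lambda>s. f ` lam s) (\<lambda>p. f ` {\<tau> \<in> Pi. p \<in> \<tau> i}) (f \<sigma>') \<psi> = sem lam \<sigma>' i \<psi>"
    if "\<sigma>' \<in> lam s" for \<sigma>'
    using Box.prems lam[of s] that by (intro Box.IH) auto
  then show ?case
    by simp
qed auto

lemma psl_model_collapse:
  assumes "sltl_model Pi lam" "finite (f ` Pi)"
  shows "psl_model (f ` Pi) (\<lambda>s. f ` lam s) (\<lambda>p. f ` {\<tau> \<in> Pi. p \<in> \<tau> i})"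
proof -
  have "Pi \<noteq> {}" "lam Star = Pi" "\<And>s. lam s \<noteq> {} \<and> lam s \<subseteq> Pi"
    using assms(1) by (auto simp: sltl_model_def)
  then show ?thesis
    using assms(2) unfolding psl_model_def by blast
qed

lemma standpoint_consistent_true_closure:
  assumes model: "sltl_model Pi lam" and "\<sigma> \<in> Pi"
    and sharp: "\<forall>(s, s')\<in>sharpenings \<phi>. lam s \<subseteq> lam s'"
  shows "standpoint_consistent (true_closure \<phi> lam \<sigma> i)"
proof -
  define letter where "letter \<tau> = \<tau> i \<inter> vars \<phi>" for \<tau> :: trace
  have "letter ` Pi \<subseteq> Pow (vars \<phi>)"
    by (auto simp: letter_def)
  then have "finite (letter ` Pi)"
    using finite_vars finite_subset by blast
  then obtain c :: "nat set \<Rightarrow> nat" where c: "inj_on c (letter ` Pi)"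
    using finite_imp_inj_to_nat_seg by blast
  define f where "f = c \<circ> letter"
  have collapse: "\<forall>\<tau>\<in>Pi. \<forall>\<tau>'\<in>Pi. f \<tau> = f \<tau>' \<longrightarrow> \<tau> i \<inter> vars \<phi> = \<tau>' i \<inter> vars \<phi>"
  proof (intro ballI impI)
    fix \<tau> \<tau>'
    assume "\<tau> \<in> Pi" "\<tau>' \<in> Pi" "f \<tau> = f \<tau>'"
    then have "letter \<tau> = letter \<tau>'"
      by (intro inj_onD[OF c]) (simp_all add: f_def)
    then show "\<tau> i \<inter> vars \<phi> = \<tau>' i \<inter> vars \<phi>"
      by (simp add: letter_def)
  qed
  have "finite (f ` Pi)"
    unfolding f_def image_comp[symmetric] using \<open>finite (letter ` Pi)\<close> by (rule finite_imageI)
  have "psl_model (f ` Pi) (\<lambda>s. f ` lam s) (\<lambda>p. f ` {\<tau> \<in> Pi. p \<in> \<tau> i})"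
    using psl_model_collapse[OF model \<open>finite (f ` Pi)\<close>] .
  moreover have "psl_sem (\<lambda>s. f ` lam s) (\<lambda>p. f ` {\<tau> \<in> Pi. p \<in> \<tau> i}) (f \<sigma>) \<psi>"
    if "\<psi> \<in> true_closure \<phi> lam \<sigma> i" "temporal_free \<psi>" for \<psi>
  proof -
    from that have "\<psi> \<in> closure \<phi>" "sem lam \<sigma> i \<psi>"
      by (auto simp: true_closure_def)
    moreover have "\<And>s. lam s \<subseteq> Pi"
      using model by (simp add: sltl_model_def)
    moreover have "\<forall>(s, s')\<in>sharpenings \<psi>. lam s \<subseteq> lam s'"
      using sharp closure_sharpenings_subset[OF \<open>\<psi> \<in> closure \<phi>\<close>] by blast
    ultimately show ?thesis
      using psl_sem_collapse[OF collapse] closure_vars_subset \<open>temporal_free \<psi>\<close> \<open>\<sigma> \<in> Pi\<close>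
      by simp
  qed
  ultimately show ?thesis
    using \<open>\<sigma> \<in> Pi\<close> unfolding standpoint_consistent_def by blast
qed

lemma true_closure_in_aut_Q:
  assumes "sltl_model Pi lam" "\<sigma> \<in> Pi" "\<forall>(s, s')\<in>sharpenings \<phi>. lam s \<subseteq> lam s'"
  shows "true_closure \<phi> lam \<sigma> i \<in> aut_Q \<phi>"
  using max_consistent_true_closure standpoint_consistent_true_closure[OF assms]
  by (simp add: aut_Q_def s_elementary_def)

lemma true_closure_in_aut_delta:
  assumes "true_closure \<phi> lam \<sigma> (Suc i) \<in> aut_Q \<phi>"
  shows "true_closure \<phi> lam \<sigma> (Suc i) \<in> aut_delta \<phi> (true_closure \<phi> lam \<sigma> i) (\<sigma> i \<inter> vars \<phi>)"
proof -
  have "\<sigma> i \<inter> vars \<phi> = {p \<in> vars \<phi>. Var p \<in> true_closure \<phi> lam \<sigma> i}"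
    using Var_subformulas_iff closure.sub by (auto simp: true_closure_def)
  moreover have "Next \<psi> \<in> true_closure \<phi> lam \<sigma> i \<longleftrightarrow> \<psi> \<in> true_closure \<phi> lam \<sigma> (Suc i)"
    if "Next \<psi> \<in> closure \<phi>" for \<psi>
    using closure_subformulas_subset[OF that] subformulas_refl that by (auto simp: true_closure_def)
  ultimately show ?thesis
    using assms by (simp add: aut_delta_def)
qed

lemma true_closure_fulfils_Until:
  assumes "\<chi> \<in> closure \<phi>"
  shows "infinite {i. Until \<psi> \<chi> \<notin> true_closure \<phi> lam \<sigma> i \<or> \<chi> \<in> true_closure \<phi> lam \<sigma> i}"
  unfolding infinite_nat_iff_unbounded_le
proof
  fix m
  show "\<exists>n\<ge>m. n \<in> {i. Until \<psi> \<chi> \<notin> true_closure \<phi> lam \<sigma> i \<or> \<chi> \<in> true_closure \<phi> lam \<sigma> i}"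
  proof (cases "sem lam \<sigma> m (Until \<psi> \<chi>)")
    case True
    then obtain n where "n \<ge> m" "sem lam \<sigma> n \<chi>"
      by auto
    then show ?thesis
      using assms by (auto simp: true_closure_def)
  qed (auto simp: true_closure_def)
qed

lemma language_nonempty_if_satisfied:
  assumes model: "sltl_model Pi lam" and "\<sigma> \<in> Pi" "sem lam \<sigma> 0 \<phi>"
    and sharp: "\<forall>(s, s')\<in>sharpenings \<phi>. lam s \<subseteq> lam s'"
  shows "language_nonempty \<phi>"
proof -
  define r where "r = true_closure \<phi> lam \<sigma>"
  have Q: "r i \<in> aut_Q \<phi>" for i
    unfolding r_def using true_closure_in_aut_Q[OF model \<open>\<sigma> \<in> Pi\<close> sharp] .
  have "r 0 \<in> aut_Q0 \<phi>"
    using Q \<open>sem lam \<sigma> 0 \<phi>\<close> closure.sub[OF subformulas_refl]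
    by (simp add: aut_Q0_def r_def true_closure_def)
  moreover have "r (Suc i) \<in> aut_delta \<phi> (r i) (\<sigma> i \<inter> vars \<phi>)" for i
    unfolding r_def using true_closure_in_aut_delta Q[unfolded r_def] .
  moreover have "infinite {i. r i \<in> F}" if F_in: "F \<in> aut_F \<phi>" for F
  proof -
    obtain \<psi> \<chi> where F: "F = {B \<in> aut_Q \<phi>. Until \<psi> \<chi> \<notin> B \<or> \<chi> \<in> B}"
      and until: "Until \<psi> \<chi> \<in> closure \<phi>"
      using F_in unfolding aut_F_def by blast
    have "\<chi> \<in> closure \<phi>"
      using closure_subformulas_subset[OF until] subformulas_refl by auto
    moreover have "{i. r i \<in> F} = {i. Until \<psi> \<chi> \<notin> r i \<or> \<chi> \<in> r i}"
      using Q F by auto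
    ultimately show ?thesis
      unfolding r_def using true_closure_fulfils_Until by simp
  qed
  ultimately show ?thesis
    unfolding language_nonempty_def accepts_def
    by (intro exI[of _ "\<lambda>i. \<sigma> i \<inter> vars \<phi>"] conjI exI[of _ r]) auto
qed

theorem lemma4:
  fixes \<phi> :: fm and ip im :: "(stpt \<times> stpt) list" and fr :: "stpt \<Rightarrow> stpt \<Rightarrow> nat"
  assumes "ltl_psl \<phi>"
    and "set ip \<union> set im = sharpenings \<phi>" and "set ip \<inter> set im = {}"
    and "distinct ip" and "distinct im"
    and "inj_on (\<lambda>(s, s'). fr s s') (set im)"
    and "\<forall>(s, s')\<in>set im. fr s s' \<notin> vars \<phi>"
    and "sltl_satisfiable (phiD \<phi> ip im fr)"
  shows "language_nonempty (phiD \<phi> ip im fr)"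
proof -
  obtain Pi lam \<sigma> where model: "sltl_model Pi lam" "\<sigma> \<in> Pi"
    and sat: "sem lam \<sigma> 0 (phiD \<phi> ip im fr)"
    using assms(8) unfolding sltl_satisfiable_def by blast
  have "sharpenings (phiD \<phi> ip im fr) = set ip"
    using sharpenings_phiD assms(2) by auto
  moreover have "lam s \<subseteq> lam s'" if "(s, s') \<in> set ip" for s s'
    using sat that by (force simp: phiD_def sem_Glob sem_conj)
  ultimately show ?thesis
    using language_nonempty_if_satisfied[OF model sat] by auto
qed

end
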